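(* Let $q$ be a prime power, $\beta$ a primitive element of $\mathbb{F}_{q^2}$, $\mathrm{Tr}(x)=x+x^q$, and $\Psi:\mathbb{F}_{q^2}^n\to\mathbb{F}_q^{2n}$, $\Psi(\alpha_0,\ldots,\alpha_{n-1})=\left(\mathrm{Tr}(\beta\alpha_0),\ldots,\mathrm{Tr}(\beta\alpha_{n-1}),\mathrm{Tr}(\beta^q\alpha_0),\ldots,\mathrm{Tr}(\beta^q\alpha_{n-1})\right)$. Let $g(x)=g_0+g_1x+\cdots+g_kx^k\in\mathbb{F}_q[x]$ be a monic divisor of $x^{2n}-1$ with $g(x)\neq x^{2n}-1$ (so $0\le k\le 2n-1$), let $\mathscr{D}=\langle g(x)\rangle$ be the $q$-ary linear cyclic code of length $2n$ generated by $g$, and let $\mathscr{C}=\Psi^{-1}(\mathscr{D})$ (an $\mathbb{F}_q$-linear additive conjucyclic code of length $n$ over $\mathbb{F}_{q^2}$). Set $V_{g(x)}=(g_0,g_1,\ldots,g_k,0,\ldots,0)\in\mathbb{F}_q^{2n}$ and $W_{g(x)}=\Psi^{-1}(V_{g(x)})\in\mathbb{F}_{q^2}^n$. Then the $2n-k$ vectors $W_{g(x)},T(W_{g(x)}),\ldots,T^{2n-k-1}(W_{g(x)})$ form an $\mathbb{F}_q$-basis of $\mathscr{C}$; i.e., the matrix with these rows is an additive generator matrix of $\mathscr{C}$.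
   Context: $T:\mathbb{F}_{q^2}^n\to\mathbb{F}_{q^2}^n$ is the conjucyclic shift $T(c_0,\ldots,c_{n-1})=(c_{n-1}^q,c_0,\ldots,c_{n-2})$. Identifying $\mathbb{F}_q^{2n}$ with $\mathbb{F}_q[x]/\langle x^{2n}-1\rangle$ via $(v_0,\ldots,v_{2n-1})\mapsto\sum v_ix^i$, $\langle g(x)\rangle$ is the ideal generated by $g$. *)

theory Defs
  imports "HOL-Computational_Algebra.Polynomial"
begin

text \<open>The ambient type 'a plays the role of F_{q^2}; F_q is its subfield of
  elements fixed by the Frobenius x |-> x^q. Vectors of length m are functions
  nat => 'a vanishing at indices >= m.\<close>

definition Fq :: "nat \<Rightarrow> 'a::field set" where
  "Fq q = {x. x ^ q = x}"

definition Tr :: "nat \<Rightarrow> 'a::field \<Rightarrow> 'a" where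
  "Tr q x = x + x ^ q"

definition vecs :: "nat \<Rightarrow> (nat \<Rightarrow> 'a::zero) set" where
  "vecs m = {v. \<forall>i\<ge>m. v i = 0}"

definition primitive_elem :: "'a::field \<Rightarrow> bool" where
  "primitive_elem b \<longleftrightarrow> b \<noteq> 0 \<and> (\<forall>x. x \<noteq> 0 \<longrightarrow> (\<exists>k::nat. x = b ^ k))"

definition Psi :: "nat \<Rightarrow> 'a::field \<Rightarrow> nat \<Rightarrow> (nat \<Rightarrow> 'a) \<Rightarrow> (nat \<Rightarrow> 'a)" where
  "Psi q b n a = (\<lambda>i. if i < n then Tr q (b * a i)
                   else if i < 2 * n then Tr q (b ^ q * a (i - n)) else 0)"

definition conjshift :: "nat \<Rightarrow> nat \<Rightarrow> (nat \<Rightarrow> 'a::field) \<Rightarrow> (nat \<Rightarrow> 'a)" where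
  "conjshift q n c = (\<lambda>i. if i = 0 then c (n - 1) ^ q else if i < n then c (i - 1) else 0)"

definition vec_poly :: "nat \<Rightarrow> (nat \<Rightarrow> 'a::comm_monoid_add) \<Rightarrow> 'a poly" where
  "vec_poly m v = (\<Sum>i<m. monom (v i) i)"

definition xm1 :: "nat \<Rightarrow> 'a::comm_ring_1 poly" where
  "xm1 m = monom 1 m - 1"

definition Fq_poly :: "nat \<Rightarrow> 'a::field poly set" where
  "Fq_poly q = {p. \<forall>i. coeff p i \<in> Fq q}"

definition cyclic_code :: "nat \<Rightarrow> nat \<Rightarrow> 'a::field poly \<Rightarrow> (nat \<Rightarrow> 'a) set" where
  "cyclic_code q m g = {v \<in> vecs m. (\<forall>i. v i \<in> Fq q) \<and>
      (\<exists>a \<in> Fq_poly q. vec_poly m v = (a * g) mod xm1 m)}"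

definition conj_code :: "nat \<Rightarrow> 'a::field \<Rightarrow> nat \<Rightarrow> 'a poly \<Rightarrow> (nat \<Rightarrow> 'a) set" where
  "conj_code q b n g = {a \<in> vecs n. Psi q b n a \<in> cyclic_code q (2 * n) g}"

definition Vg :: "nat \<Rightarrow> 'a::zero poly \<Rightarrow> (nat \<Rightarrow> 'a)" where
  "Vg m g = (\<lambda>i. if i < m then coeff g i else 0)"

definition Wg :: "nat \<Rightarrow> 'a::field \<Rightarrow> nat \<Rightarrow> 'a poly \<Rightarrow> (nat \<Rightarrow> 'a)" where
  "Wg q b n g = (THE w. w \<in> vecs n \<and> Psi q b n w = Vg (2 * n) g)"

definition Fq_span :: "nat \<Rightarrow> nat \<Rightarrow> (nat \<Rightarrow> nat \<Rightarrow> 'a::field) \<Rightarrow> (nat \<Rightarrow> 'a) set" where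
  "Fq_span q m u = {(\<lambda>i. \<Sum>j<m. c j * u j i) | c. \<forall>j<m. c j \<in> Fq q}"

definition Fq_indep :: "nat \<Rightarrow> nat \<Rightarrow> (nat \<Rightarrow> nat \<Rightarrow> 'a::field) \<Rightarrow> bool" where
  "Fq_indep q m u \<longleftrightarrow> (\<forall>c. (\<forall>j<m. c j \<in> Fq q) \<and> (\<lambda>i. \<Sum>j<m. c j * u j i) = (\<lambda>i. 0)
      \<longrightarrow> (\<forall>j<m. c j = 0))"

end

theory Submission
  imports Defs "HOL-Computational_Algebra.Primes" "HOL-Algebra.FiniteProduct"
begin

text \<open>The trace coordinates \<open>a \<mapsto> (Tr(\<beta> a), Tr(\<beta>\<^sup>q a))\<close> identify \<open>F_{q^2}\<close> with
  \<open>F_q\<^sup>2\<close>: as a linear system in \<open>a\<close> and \<open>a\<^sup>q\<close> their determinant is \<open>\<beta>\<^sup>2 - \<beta>\<^sup>2\<^sup>q \<noteq> 0\<close>,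
  because \<open>\<beta>\<close> is primitive. So \<open>\<Psi>\<close> is an \<open>F_q\<close>-linear bijection \<open>F_{q^2}\<^sup>n \<rightarrow> F_q\<^sup>2\<^sup>n\<close>,
  and since \<open>Tr(x\<^sup>q) = Tr(x)\<close> it turns the conjucyclic shift into the cyclic shift of
  length \<open>2n\<close>. Hence \<open>\<Psi>(T\<^sup>j W) = x\<^sup>j g(x)\<close> for \<open>j < 2n - k\<close>, with no reduction modulo
  \<open>x\<^sup>2\<^sup>n - 1\<close>, and \<open>\<Psi>\<close> maps the \<open>F_q\<close>-combinations of these vectors to the products
  \<open>c(x) g(x)\<close> with \<open>deg c < 2n - k\<close>. Such a product vanishes only for \<open>c = 0\<close>, and every
  codeword \<open>a(x) g(x) mod (x\<^sup>2\<^sup>n - 1)\<close> is \<open>(a mod h)(x) g(x)\<close>, where \<open>g h = x\<^sup>2\<^sup>n - 1\<close>.\<close>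

text \<open>The library's \<open>finite_field_power_card_eq_same\<close> needs the sort \<open>finite_field\<close>, which
  a type variable of sort \<open>{finite,field}\<close> does not carry.\<close>

lemma finite_field_power_card_eq_self:
  fixes x :: "'a::{finite,field}"
  shows "x ^ card (UNIV :: 'a set) = x"
proof (cases "x = 0")
  case False
  define G :: "'a monoid" where "G = \<lparr>carrier = UNIV - {0}, monoid.mult = (*), one = 1\<rparr>"
  have "\<exists>y\<in>UNIV - {0}. y * z = 1" if "z \<noteq> 0" for z :: 'a
    using that by (intro bexI[of _ "inverse z"]) auto
  then interpret comm_group G
    by (intro comm_groupI) (auto simp: G_def mult.assoc mult.commute)
  have pow: "y [^]\<^bsub>G\<^esub> k = y ^ k" for y and k :: nat
    by (induction k) (simp_all add: G_def mult.commute)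
  have "x [^]\<^bsub>G\<^esub> card (carrier G) = \<one>\<^bsub>G\<^esub>"
    using False by (intro power_order_eq_one) (simp_all add: G_def)
  then have "x ^ (card (UNIV :: 'a set) - 1) = 1"
    unfolding pow by (simp add: G_def card_Diff_singleton)
  then show ?thesis
    by (subst power_eq_if) simp
qed (simp add: finite_UNIV_card_ge_0)

lemma of_nat_card_UNIV_eq_0: "of_nat (card (UNIV :: 'a::{finite,ring_1} set)) = (0 :: 'a)"
proof -
  define G :: "'a monoid" where "G = \<lparr>carrier = UNIV, monoid.mult = (+), one = 0\<rparr>"
  have "\<exists>y. y + z = 0" for z :: 'a
    by (intro exI[of _ "- z"]) simp
  then interpret comm_group G
    by (intro comm_groupI) (auto simp: G_def add.assoc add.commute)
  have pow: "y [^]\<^bsub>G\<^esub> k = of_nat k * y" for y and k :: nat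
    by (induction k) (simp_all add: G_def algebra_simps)
  have "1 [^]\<^bsub>G\<^esub> card (carrier G) = \<one>\<^bsub>G\<^esub>"
    by (intro power_order_eq_one) (simp_all add: G_def)
  then show ?thesis
    unfolding pow by (simp add: G_def)
qed

lemma CHAR_eq_prime_of_card_UNIV:
  assumes "prime p" and "card (UNIV :: 'a::{finite,field} set) = p ^ k"
  shows "CHAR('a) = p"
proof -
  have prime: "prime CHAR('a)"
    by (intro prime_CHAR_semidom finite_imp_CHAR_pos) simp
  have "CHAR('a) dvd p ^ k"
    using of_nat_card_UNIV_eq_0[where 'a = 'a, unfolded of_nat_eq_0_iff_char_dvd] assms(2) by simp
  then show ?thesis
    using primes_dvd_imp_eq[OF prime assms(1)] prime_dvd_power[OF prime] by blast
qed

lemma frobenius_add_of_card_UNIV: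
  fixes x y :: "'a::{finite,field}"
  assumes "prime p" and "card (UNIV :: 'a set) = p ^ k" and "q = p ^ e"
  shows "(x + y) ^ q = x ^ q + y ^ q"
  using CHAR_eq_prime_of_card_UNIV[OF assms(1,2)] assms(1,3) by (intro freshmans_dream') simp_all

lemma degree_monom_1_diff:
  fixes p :: "'a::comm_ring_1 poly"
  assumes "degree p < n"
  shows "degree (monom 1 n - p) = n"
  using assms degree_add_eq_left[of "- p" "monom 1 n"] by (simp add: degree_monom_eq)

lemma primitive_elem_power_eq_1:
  fixes b x :: "'a::field"
  assumes "primitive_elem b" and "b ^ N = 1" and "x \<noteq> 0"
  shows "x ^ N = 1"
proof -
  obtain j where "x = b ^ j"
    using assms(1,3) unfolding primitive_elem_def by blast
  then have "x ^ N = (b ^ N) ^ j"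
    by (simp only: mult.commute flip: power_mult)
  then show ?thesis
    using assms(2) by simp
qed

lemma primitive_elem_card_le:
  fixes b :: "'a::{finite,field}"
  assumes "primitive_elem b" and "b ^ N = 1" and "N > 0"
  shows "card (UNIV :: 'a set) - 1 \<le> N"
proof -
  let ?p = "monom (1::'a) N - 1"
  have "poly ?p x = 0" if "x \<noteq> 0" for x
    using primitive_elem_power_eq_1[OF assms(1,2) that] by (simp add: poly_monom)
  then have roots: "UNIV - {0} \<subseteq> {x. poly ?p x = 0}"
    by blast
  have deg: "degree ?p = N"
    using assms(3) by (simp add: degree_monom_1_diff)
  then have nz: "?p \<noteq> 0"
    using assms(3) by (metis degree_0 less_irrefl)
  have "card (UNIV - {0 :: 'a}) \<le> card {x. poly ?p x = 0}"
    by (rule card_mono[OF poly_roots_finite[OF nz] roots])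
  also have "\<dots> \<le> N"
    using card_poly_roots_bound[OF nz] deg by simp
  finally show ?thesis
    by (simp add: card_Diff_singleton)
qed

lemma primitive_elem_frob_square_neq:
  fixes b :: "'a::{finite,field}"
  assumes "primitive_elem b" and "card (UNIV :: 'a set) = q\<^sup>2" and "1 < q"
  shows "(b ^ q)\<^sup>2 \<noteq> b\<^sup>2"
proof
  assume eq: "(b ^ q)\<^sup>2 = b\<^sup>2"
  have "b \<noteq> 0"
    using assms(1) by (simp add: primitive_elem_def)
  have k: "2 * q - 2 + 2 = q * 2"
    using assms(3) by simp
  have "b ^ (2 * q - 2) * b\<^sup>2 = (b ^ q)\<^sup>2"
    by (simp only: power_add[symmetric] k power_mult)
  then have "b ^ (2 * q - 2) = 1"
    using eq \<open>b \<noteq> 0\<close> by simp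
  then have "card (UNIV :: 'a set) - 1 \<le> 2 * q - 2"
    using assms(3) by (intro primitive_elem_card_le[OF assms(1)]) simp_all
  moreover have "2 * q \<le> q * q"
    using assms(3) by (intro mult_right_mono) simp_all
  ultimately show False
    using assms(2,3) unfolding power2_eq_square by linarith
qed

lemma card_Fq_le:
  assumes "1 < q"
  shows "card (Fq q :: 'a::field set) \<le> q"
proof -
  let ?p = "monom (1::'a) q - [:0, 1:]"
  have deg: "degree ?p = q"
    using assms by (simp add: degree_monom_1_diff)
  then have nz: "?p \<noteq> 0"
    using assms by (metis degree_0 less_irrefl not_one_less_zero)
  have "Fq q = {x. poly ?p x = 0}"
    by (auto simp: Fq_def poly_monom)
  then show ?thesis
    using card_poly_roots_bound[OF nz] deg by simp
qed

lemma coeff_vec_poly: "coeff (vec_poly m v) i = (if i < m then v i else 0)"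
  by (simp add: vec_poly_def coeff_sum coeff_monom)

lemma degree_vec_poly_less: "0 < m \<Longrightarrow> degree (vec_poly m v) < m"
  by (rule degree_lessI) (auto simp: coeff_vec_poly)

lemma vec_poly_coeff: "degree p < m \<Longrightarrow> vec_poly m (coeff p) = p"
  by (rule poly_eqI) (auto simp: coeff_vec_poly coeff_eq_0)

lemma vec_poly_Vg: "degree p < m \<Longrightarrow> vec_poly m (Vg m p) = p"
  by (rule poly_eqI) (auto simp: coeff_vec_poly Vg_def coeff_eq_0)

lemma Vg_vec_poly: "v \<in> vecs m \<Longrightarrow> Vg m (vec_poly m v) = v"
  by (auto simp: Vg_def coeff_vec_poly vecs_def)

lemma Vg_vec_poly_mult:
  fixes p :: "'a::comm_semiring_1 poly"
  shows "Vg m (vec_poly k c * p) = (\<lambda>i. \<Sum>j<k. c j * Vg m (monom 1 j * p) i)"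
  by (rule ext) (auto simp: Vg_def vec_poly_def sum_distrib_right coeff_sum coeff_monom_mult
      intro: sum.cong)

definition cyclic_shift :: "nat \<Rightarrow> (nat \<Rightarrow> 'a::zero) \<Rightarrow> nat \<Rightarrow> 'a" where
  "cyclic_shift m v = (\<lambda>i. if i = 0 then v (m - 1) else if i < m then v (i - 1) else 0)"

lemma cyclic_shift_Vg:
  fixes p :: "'a::comm_semiring_1 poly"
  assumes "Suc (degree p) < m"
  shows "cyclic_shift m (Vg m p) = Vg m (monom 1 1 * p)"
proof
  fix i
  have "coeff p (m - 1) = 0"
    using assms by (intro coeff_eq_0) simp
  then show "cyclic_shift m (Vg m p) i = Vg m (monom 1 1 * p) i"
    using assms by (auto simp: cyclic_shift_def Vg_def coeff_monom_mult)
qed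

lemma cyclic_shift_pow_Vg:
  fixes p :: "'a::comm_semiring_1 poly"
  shows "degree p + j < m \<Longrightarrow> (cyclic_shift m ^^ j) (Vg m p) = Vg m (monom 1 j * p)"
proof (induction j)
  case (Suc j)
  have "degree (monom 1 j * p) \<le> j + degree p"
    by (metis degree_monom_le degree_mult_le add_le_mono1 order_trans)
  moreover have "monom 1 (Suc j) = monom (1::'a) 1 * monom 1 j"
    by (simp add: mult_monom)
  ultimately show ?case
    using Suc by (simp add: cyclic_shift_Vg mult.assoc)
qed simp

lemma degree_xm1: "0 < m \<Longrightarrow> degree (xm1 m :: 'a::field poly) = m"
  by (simp add: xm1_def degree_monom_1_diff)

lemma lead_coeff_xm1: "0 < m \<Longrightarrow> lead_coeff (xm1 m :: 'a::field poly) = 1"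
  by (simp add: degree_xm1) (simp add: xm1_def)

lemma xm1_neq_0: "0 < m \<Longrightarrow> xm1 m \<noteq> (0 :: 'a::field poly)"
  using degree_xm1[of m, where 'a = 'a] by (metis degree_0 less_irrefl)

lemma degree_factors_xm1:
  fixes g h :: "'a::field poly"
  assumes "0 < m" and "xm1 m = g * h"
  shows "degree g + degree h = m"
proof -
  have "g \<noteq> 0" "h \<noteq> 0"
    using xm1_neq_0[OF assms(1), where 'a = 'a] assms(2) by auto
  then show ?thesis
    using assms by (metis degree_mult_eq degree_xm1)
qed

lemma degree_cofactor_xm1_pos:
  fixes g h :: "'a::field poly"
  assumes "0 < m" and "xm1 m = g * h" and "lead_coeff g = 1" and "g \<noteq> xm1 m"
  shows "0 < degree h"
proof (rule ccontr)
  assume "\<not> 0 < degree h"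
  moreover have "lead_coeff h = 1"
    using assms lead_coeff_xm1[OF assms(1), where 'a = 'a] by (simp add: lead_coeff_mult)
  ultimately have "h = 1"
    by (metis degree_0_id gr0I one_poly_eq_simps(1))
  then show False
    using assms(2,4) by simp
qed

lemma degree_vec_poly_mult_less:
  fixes g :: "'a::comm_semiring_0 poly"
  assumes "0 < m" and "degree g + m \<le> N"
  shows "degree (vec_poly m c * g) < N"
  using degree_mult_le[of "vec_poly m c" g] degree_vec_poly_less[OF assms(1), of c] assms(2)
  by linarith

lemma lincomb_in_vecs:
  fixes c :: "nat \<Rightarrow> 'a::semiring_0"
  shows "(\<And>j. j < k \<Longrightarrow> u j \<in> vecs m) \<Longrightarrow> (\<lambda>i. \<Sum>j<k. c j * u j i) \<in> vecs m"
  by (auto simp: vecs_def intro!: sum.neutral)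

definition frob_poly :: "nat \<Rightarrow> 'a::field poly \<Rightarrow> 'a poly" where
  "frob_poly q p = map_poly (\<lambda>x. x ^ q) p"

locale trace_coords =
  fixes q :: nat and b :: "'a::{finite,field}"
  assumes q_gt_1: "1 < q"
    and card_UNIV: "card (UNIV :: 'a set) = q\<^sup>2"
    and frob_add: "(x + y :: 'a) ^ q = x ^ q + y ^ q"
    and frob_det: "(b ^ q)\<^sup>2 \<noteq> b\<^sup>2"
begin

lemma frob_frob [simp]: "(x ^ q) ^ q = (x :: 'a)"
  using finite_field_power_card_eq_self[of x] card_UNIV by (simp add: power2_eq_square flip: power_mult)

lemma frob_0 [simp]: "(0::'a) ^ q = 0"
  using q_gt_1 by simp

lemma frob_uminus: "(- x :: 'a) ^ q = - (x ^ q)"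
  using frob_add[of x "- x"] by (simp add: eq_neg_iff_add_eq_0 add.commute)

lemma frob_diff: "(x - y :: 'a) ^ q = x ^ q - y ^ q"
  using frob_add[of x "- y"] by (simp add: frob_uminus)

lemma frob_sum: "(\<Sum>j\<in>A. f j :: 'a) ^ q = (\<Sum>j\<in>A. f j ^ q)"
  by (induction A rule: infinite_finite_induct) (simp_all add: frob_add)

lemma Tr_in_Fq: "Tr q (x :: 'a) \<in> Fq q"
  by (simp add: Fq_def Tr_def frob_add add.commute)

lemma Tr_diff: "Tr q (x - y :: 'a) = Tr q x - Tr q y"
  by (simp add: Tr_def frob_diff)

lemma Tr_sum: "Tr q (\<Sum>j\<in>A. f j :: 'a) = (\<Sum>j\<in>A. Tr q (f j))"
  by (simp add: Tr_def frob_sum sum.distrib)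

lemma Tr_mult_Fq: "c \<in> Fq q \<Longrightarrow> Tr q (c * x :: 'a) = c * Tr q x"
  by (simp add: Tr_def Fq_def power_mult_distrib distrib_left)

lemma Tr_frob_mult: "Tr q (b * y ^ q) = Tr q (b ^ q * y)" "Tr q (b ^ q * y ^ q) = Tr q (b * y)"
  by (simp_all add: Tr_def power_mult_distrib)

lemma trace_coords_inj: "inj (\<lambda>a. (Tr q (b * a), Tr q (b ^ q * a)))"
proof (rule injI)
  fix x y
  assume "(Tr q (b * x), Tr q (b ^ q * x)) = (Tr q (b * y), Tr q (b ^ q * y))"
  then have "Tr q (b * (x - y)) = 0" "Tr q (b ^ q * (x - y)) = 0"
    by (simp_all add: right_diff_distrib Tr_diff)
  then have "b * (x - y) + b ^ q * (x - y) ^ q = 0" "b ^ q * (x - y) + b * (x - y) ^ q = 0"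
    by (simp_all add: Tr_def power_mult_distrib)
  moreover have "(b\<^sup>2 - (b ^ q)\<^sup>2) * (x - y)
      = b * (b * (x - y) + b ^ q * (x - y) ^ q) - b ^ q * (b ^ q * (x - y) + b * (x - y) ^ q)"
    by (simp add: power2_eq_square algebra_simps)
  ultimately have "(b\<^sup>2 - (b ^ q)\<^sup>2) * (x - y) = 0"
    by simp
  then show "x = y"
    using frob_det by simp
qed

lemma trace_coords_range: "range (\<lambda>a. (Tr q (b * a), Tr q (b ^ q * a))) = Fq q \<times> Fq q"
proof -
  let ?f = "\<lambda>a. (Tr q (b * a), Tr q (b ^ q * a))"
  have "card (Fq q \<times> Fq q :: ('a \<times> 'a) set) \<le> q\<^sup>2"
    using card_Fq_le[OF q_gt_1, where 'a = 'a]
    by (simp add: card_cartesian_product power2_eq_square mult_le_mono)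
  also have "q\<^sup>2 = card (range ?f)"
    using trace_coords_inj by (simp add: card_image card_UNIV)
  finally have "card (Fq q \<times> Fq q :: ('a \<times> 'a) set) \<le> card (range ?f)" .
  moreover have "range ?f \<subseteq> Fq q \<times> Fq q"
    by (auto simp: Tr_in_Fq)
  ultimately show ?thesis
    by (metis card_seteq finite_SigmaI finite)
qed

lemma coeff_frob_poly: "coeff (frob_poly q p) i = (coeff p i :: 'a) ^ q"
  by (simp add: frob_poly_def coeff_map_poly)

lemma frob_poly_mult: "frob_poly q (p * r :: 'a poly) = frob_poly q p * frob_poly q r"
  by (rule poly_eqI) (simp add: coeff_frob_poly coeff_mult frob_sum power_mult_distrib)

lemma Fq_poly_iff_frob_poly: "(p :: 'a poly) \<in> Fq_poly q \<longleftrightarrow> frob_poly q p = p"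
  by (auto simp: Fq_poly_def Fq_def coeff_frob_poly poly_eq_iff)

lemma Fq_poly_mult: "(p :: 'a poly) \<in> Fq_poly q \<Longrightarrow> r \<in> Fq_poly q \<Longrightarrow> p * r \<in> Fq_poly q"
  by (simp add: Fq_poly_iff_frob_poly frob_poly_mult)

lemma Fq_poly_mult_cancel:
  assumes "p * r \<in> Fq_poly q" and "(r :: 'a poly) \<in> Fq_poly q" and "r \<noteq> 0"
  shows "p \<in> Fq_poly q"
  using assms by (simp add: Fq_poly_iff_frob_poly frob_poly_mult)

lemma zero_in_Fq [simp]: "(0 :: 'a) \<in> Fq q"
  by (simp add: Fq_def)

lemma Psi_lincomb:
  assumes "\<forall>j<m. c j \<in> Fq q"
  shows "Psi q b n (\<lambda>i. \<Sum>j<m. c j * u j i) = (\<lambda>i. \<Sum>j<m. c j * Psi q b n (u j) i)"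
proof
  fix i
  have "Tr q (x * (\<Sum>j<m. c j * u j l)) = (\<Sum>j<m. c j * Tr q (x * u j l))" for x l
  proof -
    have "Tr q (x * (\<Sum>j<m. c j * u j l)) = Tr q (\<Sum>j<m. c j * (x * u j l))"
      by (simp add: sum_distrib_left mult_ac)
    also have "\<dots> = (\<Sum>j<m. c j * Tr q (x * u j l))"
      using assms by (simp add: Tr_sum Tr_mult_Fq)
    finally show ?thesis .
  qed
  then show "Psi q b n (\<lambda>i. \<Sum>j<m. c j * u j i) i = (\<Sum>j<m. c j * Psi q b n (u j) i)"
    by (simp add: Psi_def)
qed

lemma Psi_inj: "inj_on (Psi q b n) (vecs n)"
proof (rule inj_onI)
  fix a a' assume vecs: "a \<in> vecs n" "a' \<in> vecs n" and eq: "Psi q b n a = Psi q b n a'"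
  show "a = a'"
  proof
    fix i
    show "a i = a' i"
    proof (cases "i < n")
      case True
      have "Psi q b n a i = Psi q b n a' i" "Psi q b n a (n + i) = Psi q b n a' (n + i)"
        using eq by simp_all
      then have "(Tr q (b * a i), Tr q (b ^ q * a i)) = (Tr q (b * a' i), Tr q (b ^ q * a' i))"
        using True by (simp add: Psi_def)
      then show ?thesis
        by (rule injD[OF trace_coords_inj])
    next
      case False
      then show ?thesis
        using vecs by (simp add: vecs_def)
    qed
  qed
qed

lemma Psi_surj:
  assumes "v \<in> vecs (2 * n)" and "\<forall>i. v i \<in> Fq q"
  obtains a where "a \<in> vecs n" and "Psi q b n a = v"
proof -
  have "\<forall>i. (v i, v (n + i)) \<in> range (\<lambda>a. (Tr q (b * a), Tr q (b ^ q * a)))"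
    using assms(2) unfolding trace_coords_range by simp
  then have "\<forall>i. \<exists>a. (v i, v (n + i)) = (Tr q (b * a), Tr q (b ^ q * a))"
    by (simp add: image_iff)
  from choice[OF this] obtain w where w: "\<And>i. (v i, v (n + i)) = (Tr q (b * w i), Tr q (b ^ q * w i))"
    by blast
  define a where "a i = (if i < n then w i else 0)" for i
  have "Psi q b n a = v"
  proof
    fix i
    show "Psi q b n a i = v i"
      using w[of i] w[of "i - n"] assms(1) by (auto simp: Psi_def a_def vecs_def)
  qed
  moreover have "a \<in> vecs n"
    by (simp add: a_def vecs_def)
  ultimately show thesis
    using that by blast
qed

lemma Wg_spec:
  assumes "g \<in> Fq_poly q"
  shows "Wg q b n g \<in> vecs n" and "Psi q b n (Wg q b n g) = Vg (2 * n) g"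
proof -
  have V: "Vg (2 * n) g \<in> vecs (2 * n)" "\<forall>i. Vg (2 * n) g i \<in> Fq q"
    using assms by (simp_all add: Vg_def vecs_def Fq_poly_def)
  obtain w where w: "w \<in> vecs n" "Psi q b n w = Vg (2 * n) g"
    using Psi_surj[OF V] .
  have "Wg q b n g = w"
    unfolding Wg_def
  proof (rule the_equality)
    fix w' assume w': "w' \<in> vecs n \<and> Psi q b n w' = Vg (2 * n) g"
    show "w' = w"
      by (rule inj_onD[OF Psi_inj]) (use w w' in auto)
  qed (use w in simp)
  then show "Wg q b n g \<in> vecs n" and "Psi q b n (Wg q b n g) = Vg (2 * n) g"
    using w by simp_all
qed

lemma conjshift_pow_in_vecs: "c \<in> vecs n \<Longrightarrow> (conjshift q n ^^ j) c \<in> vecs n"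
  using q_gt_1 by (induction j) (auto simp: vecs_def conjshift_def)

lemma Psi_conjshift:
  assumes "0 < n"
  shows "Psi q b n (conjshift q n c) = cyclic_shift (2 * n) (Psi q b n c)"
proof
  fix i
  \<comment> \<open>only the seams \<open>i = 0\<close> and \<open>i = n\<close> see the conjugation, which \<open>Tr_frob_mult\<close> absorbs\<close>
  consider "i = 0" | "0 < i" "i < n" | "i = n" | "n < i" "i < 2 * n" | "2 * n \<le> i"
    by linarith
  then show "Psi q b n (conjshift q n c) i = cyclic_shift (2 * n) (Psi q b n c) i"
  proof cases
    case 1
    moreover have "\<not> 2 * n - 1 < n" "2 * n - 1 - n = n - 1"
      using assms by auto
    ultimately show ?thesis
      using assms by (simp add: Psi_def conjshift_def cyclic_shift_def Tr_frob_mult)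
  next
    case 2
    moreover have "i - 1 < n"
      using 2 by simp
    ultimately show ?thesis
      by (simp add: Psi_def conjshift_def cyclic_shift_def)
  next
    case 3
    then show ?thesis
      using assms by (simp add: Psi_def conjshift_def cyclic_shift_def Tr_frob_mult)
  next
    case 4
    moreover have "i - n < n" "\<not> i - 1 < n" "i - n \<noteq> 0" "i - 1 - n = i - n - 1"
      using 4 by auto
    ultimately show ?thesis
      by (simp add: Psi_def conjshift_def cyclic_shift_def)
  next
    case 5
    then show ?thesis
      by (simp add: Psi_def conjshift_def cyclic_shift_def)
  qed
qed

lemma Psi_conjshift_pow:
  "0 < n \<Longrightarrow> Psi q b n ((conjshift q n ^^ j) c) = (cyclic_shift (2 * n) ^^ j) (Psi q b n c)"
  by (induction j) (simp_all add: Psi_conjshift)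

lemma Psi_lincomb_conjshift_Wg:
  assumes "0 < n" and "g \<in> Fq_poly q" and "degree g + m \<le> 2 * n" and "\<forall>j<m. c j \<in> Fq q"
  shows "Psi q b n (\<lambda>i. \<Sum>j<m. c j * (conjshift q n ^^ j) (Wg q b n g) i)
    = Vg (2 * n) (vec_poly m c * g)"
proof -
  have "Psi q b n ((conjshift q n ^^ j) (Wg q b n g)) = Vg (2 * n) (monom 1 j * g)" if "j < m" for j
  proof -
    have "degree g + j < 2 * n"
      using that assms(3) by linarith
    then show ?thesis
      using Wg_spec(2)[OF assms(2)] by (simp add: Psi_conjshift_pow[OF assms(1)] cyclic_shift_pow_Vg)
  qed
  then show ?thesis
    by (simp add: Psi_lincomb[OF assms(4)] Vg_vec_poly_mult)
qed

lemma Vg_mult_in_cyclic_code: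
  fixes r g :: "'a poly"
  assumes "r \<in> Fq_poly q" and "g \<in> Fq_poly q" and "degree (r * g) < m"
  shows "Vg m (r * g) \<in> cyclic_code q m g"
proof -
  have "0 < m"
    using assms(3) by simp
  then have "vec_poly m (Vg m (r * g)) = (r * g) mod xm1 m"
    using assms(3) by (simp add: vec_poly_Vg mod_poly_less degree_xm1)
  moreover have "Vg m (r * g) i \<in> Fq q" for i
    using Fq_poly_mult[OF assms(1,2)] by (simp add: Vg_def Fq_poly_def)
  ultimately show ?thesis
    using assms(1) by (auto simp: cyclic_code_def Vg_def vecs_def)
qed

lemma cyclic_code_elem:
  fixes g h :: "'a poly"
  assumes "v \<in> cyclic_code q m g" and "g \<in> Fq_poly q" and "xm1 m = g * h" and "0 < m"
  obtains r where "r \<in> Fq_poly q" and "r = 0 \<or> degree r < degree h" and "v = Vg m (r * g)"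
proof -
  obtain a where v: "v \<in> vecs m" "\<forall>i. v i \<in> Fq q" and a: "vec_poly m v = (a * g) mod xm1 m"
    using assms(1) by (auto simp: cyclic_code_def)
  have nz: "g \<noteq> 0" "h \<noteq> 0"
    using xm1_neq_0[OF assms(4), where 'a = 'a] assms(3) by auto
  define r where "r = a mod h"
  have r: "r = 0 \<or> degree r < degree h"
    using degree_mod_less[OF nz(2)] by (simp add: r_def)
  have "a * g = r * g + a div h * xm1 m"
  proof -
    have "a * g = (a div h * h + r) * g"
      by (simp add: r_def)
    then show ?thesis
      using assms(3) by (simp add: algebra_simps)
  qed
  moreover have "degree (r * g) < m"
  proof (cases "r = 0")
    case True
    then show ?thesis
      using assms(4) by simp
  next
    case False
    then show ?thesis
      using r degree_factors_xm1[OF assms(4,3)] nz(1) by (simp add: degree_mult_eq)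
  qed
  ultimately have vp: "vec_poly m v = r * g"
    using a by (simp add: mod_poly_less degree_xm1[OF assms(4)])
  then have "v = Vg m (r * g)"
    using Vg_vec_poly[OF v(1)] by simp
  moreover have "r * g \<in> Fq_poly q"
    using v(2) by (simp add: Fq_poly_def coeff_vec_poly flip: vp)
  then have "r \<in> Fq_poly q"
    using Fq_poly_mult_cancel assms(2) nz(1) by blast
  ultimately show thesis
    using that r by blast
qed

lemma Psi_zero: "Psi q b n (\<lambda>i. 0) = (\<lambda>i. 0)"
  by (simp add: Psi_def Tr_def fun_eq_iff)

lemma Fq_indep_conjshift_Wg:
  assumes "0 < n" and "g \<in> Fq_poly q" and "g \<noteq> 0" and "0 < m" and "degree g + m \<le> 2 * n"
  shows "Fq_indep q m (\<lambda>j. (conjshift q n ^^ j) (Wg q b n g))"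
  unfolding Fq_indep_def
proof (intro allI, rule impI)
  fix c :: "nat \<Rightarrow> 'a"
  assume c: "(\<forall>j<m. c j \<in> Fq q) \<and> (\<lambda>i. \<Sum>j<m. c j * (conjshift q n ^^ j) (Wg q b n g) i) = (\<lambda>i. 0)"
  have "Vg (2 * n) (vec_poly m c * g) = Psi q b n (\<lambda>i. 0)"
    using Psi_lincomb_conjshift_Wg[OF assms(1,2,5), of c] c by simp
  then have zero: "Vg (2 * n) (vec_poly m c * g) = (\<lambda>i. 0)"
    by (simp add: Psi_zero)
  have "vec_poly m c * g = vec_poly (2 * n) (Vg (2 * n) (vec_poly m c * g))"
    by (simp add: vec_poly_Vg degree_vec_poly_mult_less[OF assms(4,5)])
  also have "\<dots> = 0"
    unfolding zero by (simp add: vec_poly_def)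
  finally have "vec_poly m c = 0"
    using assms(3) by simp
  then show "\<forall>j<m. c j = 0"
    by (metis coeff_0 coeff_vec_poly)
qed

lemma Fq_span_conjshift_Wg:
  assumes "0 < n" and "g \<in> Fq_poly q" and "xm1 (2 * n) = g * h" and "0 < degree h"
  shows "Fq_span q (degree h) (\<lambda>j. (conjshift q n ^^ j) (Wg q b n g)) = conj_code q b n g"
proof
  let ?u = "\<lambda>j. (conjshift q n ^^ j) (Wg q b n g)"
  have n2: "0 < 2 * n"
    using assms(1) by simp
  have deg: "degree g + degree h \<le> 2 * n"
    using degree_factors_xm1[OF n2 assms(3)] by simp
  have u: "?u j \<in> vecs n" for j
    using Wg_spec(1)[OF assms(2)] by (rule conjshift_pow_in_vecs)
  show "Fq_span q (degree h) ?u \<subseteq> conj_code q b n g"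
  proof
    fix x assume "x \<in> Fq_span q (degree h) ?u"
    then obtain c where c: "\<forall>j<degree h. c j \<in> Fq q" and x: "x = (\<lambda>i. \<Sum>j<degree h. c j * ?u j i)"
      by (auto simp: Fq_span_def)
    have "vec_poly (degree h) c \<in> Fq_poly q"
      using c by (simp add: Fq_poly_def coeff_vec_poly)
    then have "Vg (2 * n) (vec_poly (degree h) c * g) \<in> cyclic_code q (2 * n) g"
      using assms(2) degree_vec_poly_mult_less[OF assms(4) deg] by (rule Vg_mult_in_cyclic_code)
    then show "x \<in> conj_code q b n g"
      using Psi_lincomb_conjshift_Wg[OF assms(1,2) deg c] lincomb_in_vecs[OF u]
      by (simp add: conj_code_def x)
  qed
  show "conj_code q b n g \<subseteq> Fq_span q (degree h) ?u"
  proof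
    fix a assume "a \<in> conj_code q b n g"
    then have a: "a \<in> vecs n" "Psi q b n a \<in> cyclic_code q (2 * n) g"
      by (simp_all add: conj_code_def)
    obtain r where r: "r \<in> Fq_poly q" "r = 0 \<or> degree r < degree h" "Psi q b n a = Vg (2 * n) (r * g)"
      using cyclic_code_elem[OF a(2) assms(2,3) n2] by blast
    have c: "\<forall>j<degree h. coeff r j \<in> Fq q"
      using r(1) by (simp add: Fq_poly_def)
    have "vec_poly (degree h) (coeff r) = r"
      using r(2) assms(4) by (auto intro: vec_poly_coeff)
    then have "Psi q b n a = Psi q b n (\<lambda>i. \<Sum>j<degree h. coeff r j * ?u j i)"
      using Psi_lincomb_conjshift_Wg[OF assms(1,2) deg c] r(3) by simp
    then have "a = (\<lambda>i. \<Sum>j<degree h. coeff r j * ?u j i)"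
      by (rule inj_onD[OF Psi_inj]) (simp_all add: a(1) lincomb_in_vecs[OF u])
    then show "a \<in> Fq_span q (degree h) ?u"
      using c by (auto simp: Fq_span_def)
  qed
qed

end

theorem theorem4p3:
  fixes q n :: nat and b :: "'a::{finite,field}" and g :: "'a poly"
  assumes "\<exists>p e. prime p \<and> e > 0 \<and> q = p ^ e"
    and "card (UNIV :: 'a set) = q ^ 2"
    and "primitive_elem b"
    and "n > 0"
    and "g \<in> Fq_poly q" and "lead_coeff g = 1"
    and "\<exists>h \<in> Fq_poly q. xm1 (2 * n) = g * h"
    and "g \<noteq> xm1 (2 * n)"
  shows "Fq_indep q (2 * n - degree g) (\<lambda>j. (conjshift q n ^^ j) (Wg q b n g))
       \<and> Fq_span q (2 * n - degree g) (\<lambda>j. (conjshift q n ^^ j) (Wg q b n g))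
           = conj_code q b n g"
proof -
  obtain p e where pe: "prime p" "0 < e" "q = p ^ e"
    using assms(1) by blast
  have q: "1 < q"
    using one_less_power[OF prime_gt_1_nat[OF pe(1)] pe(2)] pe(3) by simp
  have card: "card (UNIV :: 'a set) = p ^ (e * 2)"
    using assms(2) pe(3) by (simp add: power_mult)
  interpret trace_coords q b
    using q assms(2) frobenius_add_of_card_UNIV[OF pe(1) card pe(3)]
      primitive_elem_frob_square_neq[OF assms(3,2) q]
    by unfold_locales auto
  obtain h where h: "xm1 (2 * n) = g * h"
    using assms(7) by blast
  have n2: "0 < 2 * n"
    using assms(4) by simp
  have deg: "degree g + degree h = 2 * n"
    using degree_factors_xm1[OF n2 h] .
  then have m: "2 * n - degree g = degree h"
    by simp
  have "0 < degree h"
    using degree_cofactor_xm1_pos[OF n2 h assms(6,8)] .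
  moreover have "g \<noteq> 0"
    using assms(6) by auto
  ultimately show ?thesis
    unfolding m using Fq_indep_conjshift_Wg[OF assms(4,5)] Fq_span_conjshift_Wg[OF assms(4,5) h] deg
    by simp
qed

end
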